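(* Let $(X,d)$ be a compact metric space and let $f:X\to X$ be a continuous map. Then there is no closed set $J\subseteq CR_f$ such that the poset $(J/E,\preceq)$ is linearly and densely ordered. In particular, the chain components poset $(\mathfrak{C}_f,\preceq)$ is not linearly and densely ordered.
   Context: Let $(X,d)$ be a metric space and $f:X\to X$ a map. For $\varepsilon>0$ and $x,y\in X$, an $\varepsilon$-chain from $x$ to $y$ is a finite sequence $x_0=x,x_1,\dots,x_n=y$ with $n\ge 1$ and $d(f(x_i),x_{i+1})<\varepsilon$ for $i=0,\dots,n-1$. Write $x\,\mathcal{C}\,y$ if for every $\varepsilon>0$ there is an $\varepsilon$-chain from $x$ to $y$. The chain recurrent set is $CR_f=\{x\in X: x\,\mathcal{C}\,x\}$. On $CR_f$ define the equivalence relation $x\,E\,y$ iff $x\,\mathcal{C}\,y$ and $y\,\mathcal{C}\,x$; the equivalence classes are the chain components, and $\mathfrak{C}_f=CR_f/E$. The partial order on chain components is $[x]\preceq[y]$ iff $y\,\mathcal{C}\,x$; $(\mathfrak{C}_f,\preceq)$ is the chain components poset. For $J\subseteq CR_f$, $J/E$ denotes the set of $E$-classes of points of $J$ (i.e. $E$ restricted to $J$), ordered by the same rule $[x]\preceq[y]$ iff $y\,\mathcal{C}\,x$. A poset is densely ordered if it has at least two elements and for every $a<b$ there is $c$ with $a<c<b$ (so a densely ordered poset is infinite). *)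

theory Defs
  imports "HOL-Analysis.Analysis"
begin

definition eps_chain :: "'a::metric_space set \<Rightarrow> ('a \<Rightarrow> 'a) \<Rightarrow> real \<Rightarrow> 'a \<Rightarrow> 'a \<Rightarrow> bool" where
  "eps_chain X f e x y \<longleftrightarrow>
     (\<exists>n::nat. \<exists>xs::nat \<Rightarrow> 'a. n \<ge> 1 \<and> xs 0 = x \<and> xs n = y \<and> (\<forall>i\<le>n. xs i \<in> X) \<and>
        (\<forall>i<n. dist (f (xs i)) (xs (Suc i)) < e))"

definition chain_rel :: "'a::metric_space set \<Rightarrow> ('a \<Rightarrow> 'a) \<Rightarrow> 'a \<Rightarrow> 'a \<Rightarrow> bool" where
  "chain_rel X f x y \<longleftrightarrow> (\<forall>e>0. eps_chain X f e x y)"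

definition chain_recurrent_set :: "'a::metric_space set \<Rightarrow> ('a \<Rightarrow> 'a) \<Rightarrow> 'a set" where
  "chain_recurrent_set X f = {x \<in> X. chain_rel X f x x}"

definition chainE :: "'a::metric_space set \<Rightarrow> ('a \<Rightarrow> 'a) \<Rightarrow> ('a \<times> 'a) set" where
  "chainE X f = {(x, y). x \<in> chain_recurrent_set X f \<and> y \<in> chain_recurrent_set X f \<and>
                      chain_rel X f x y \<and> chain_rel X f y x}"

definition classes_of :: "'a::metric_space set \<Rightarrow> ('a \<Rightarrow> 'a) \<Rightarrow> 'a set \<Rightarrow> 'a set set" where
  "classes_of X f J = J // (chainE X f \<inter> (J \<times> J))"

definition class_le :: "'a::metric_space set \<Rightarrow> ('a \<Rightarrow> 'a) \<Rightarrow> 'a set \<Rightarrow> 'a set \<Rightarrow> bool" where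
  "class_le X f A B \<longleftrightarrow> (\<exists>x\<in>A. \<exists>y\<in>B. chain_rel X f y x)"

definition linear_dense_order :: "'b set \<Rightarrow> ('b \<Rightarrow> 'b \<Rightarrow> bool) \<Rightarrow> bool" where
  "linear_dense_order P le \<longleftrightarrow>
     (\<forall>a\<in>P. le a a) \<and>
     (\<forall>a\<in>P. \<forall>b\<in>P. le a b \<and> le b a \<longrightarrow> a = b) \<and>
     (\<forall>a\<in>P. \<forall>b\<in>P. \<forall>c\<in>P. le a b \<and> le b c \<longrightarrow> le a c) \<and>
     (\<forall>a\<in>P. \<forall>b\<in>P. le a b \<or> le b a) \<and>
     (\<exists>a\<in>P. \<exists>b\<in>P. a \<noteq> b) \<and>
     (\<forall>a\<in>P. \<forall>b\<in>P. le a b \<and> a \<noteq> b \<longrightarrow> (\<exists>c\<in>P. le a c \<and> a \<noteq> c \<and> le c b \<and> c \<noteq> b))"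

end

theory Submission
  imports Defs
begin

(* Suppose the classes of a closed J \<subseteq> CR_f were linearly and densely ordered, and pick x, y
   in J and e > 0 with no e-chain from x to y. The set R of points of J reachable from x by an
   e-chain is closed (a point of J is chain recurrent, so a small perturbation of the end of a
   chain can be absorbed by an e-chain from that point to itself) and open in J (e-chains are
   robust at their end), and it is closed downstream under the chain relation. By compactness R
   has a most upstream point a and J - R a most downstream point b. Then b lies strictly
   upstream of a with no class in between, contradicting density. *)

section \<open>Compact totally preordered sets\<close>

lemma compact_total_preorder_has_top:
  fixes K :: "'a::topological_space set"
  assumes "compact K" "K \<noteq> {}"
    and total: "\<forall>a\<in>K. \<forall>b\<in>K. Q a b \<or> Q b a"
    and trans: "\<forall>a\<in>K. \<forall>b\<in>K. \<forall>c\<in>K. Q a b \<longrightarrow> Q b c \<longrightarrow> Q a c"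
    and closed_up: "\<forall>p\<in>K. closed {z. Q z p}"
  shows "\<exists>z\<in>K. \<forall>p\<in>K. Q z p"
proof -
  have "K \<inter> (\<Inter>p\<in>K. {z. Q z p}) \<noteq> {}"
  proof (rule compact_imp_fip_image[OF \<open>compact K\<close>])
    show "closed {z. Q z p}" if "p \<in> K" for p
      using closed_up that by blast
    fix P assume "finite P" "P \<subseteq> K"
    then show "K \<inter> (\<Inter>p\<in>P. {z. Q z p}) \<noteq> {}"
    proof (induction P rule: finite_induct)
      case empty
      then show ?case using \<open>K \<noteq> {}\<close> by simp
    next
      case (insert q P)
      then obtain z where z: "z \<in> K" "\<forall>p\<in>P. Q z p" by auto
      have q: "q \<in> K" "P \<subseteq> K" using insert.prems by auto
      show ?case
      proof (cases "Q z q")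
        case True
        then show ?thesis using z by auto
      next
        case False
        then have "Q q z" using total z q by blast
        then have "\<forall>p\<in>insert q P. Q q p" using z q total trans by blast
        then show ?thesis using q by auto
      qed
    qed
  qed
  then show ?thesis by auto
qed

lemma compact_total_preorder_clopen_down_set_gap:
  fixes J R :: "'a::topological_space set"
  assumes "compact J"
    and total: "\<forall>a\<in>J. \<forall>b\<in>J. Q a b \<or> Q b a"
    and trans: "\<forall>a\<in>J. \<forall>b\<in>J. \<forall>c\<in>J. Q a b \<longrightarrow> Q b c \<longrightarrow> Q a c"
    and closed_up: "\<forall>p\<in>J. closed {z. Q z p}"
    and closed_down: "\<forall>p\<in>J. closed {z. Q p z}"
    and "closed R" "closed (J - R)" "R \<subseteq> J" "R \<noteq> {}" "J - R \<noteq> {}"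
    and down: "\<forall>z\<in>R. \<forall>w\<in>J. Q z w \<longrightarrow> w \<in> R"
  obtains a b where "a \<in> J" "b \<in> J" "Q b a" "\<not> Q a b"
    "\<not> (\<exists>w\<in>J. Q b w \<and> \<not> Q w b \<and> Q w a \<and> \<not> Q a w)"
proof -
  have "compact (J \<inter> R)" "compact (J \<inter> (J - R))"
    using compact_Int_closed \<open>compact J\<close> \<open>closed R\<close> \<open>closed (J - R)\<close> by blast+
  then have compact_R: "compact R" and compact_S: "compact (J - R)"
    using \<open>R \<subseteq> J\<close> by (simp_all add: Int_absorb1)
  have "\<exists>a\<in>R. \<forall>p\<in>R. Q a p"
  proof (rule compact_total_preorder_has_top[OF compact_R \<open>R \<noteq> {}\<close>])
    show "\<forall>a\<in>R. \<forall>b\<in>R. Q a b \<or> Q b a" using total \<open>R \<subseteq> J\<close> by blast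
    show "\<forall>a\<in>R. \<forall>b\<in>R. \<forall>c\<in>R. Q a b \<longrightarrow> Q b c \<longrightarrow> Q a c" using trans \<open>R \<subseteq> J\<close> by blast
    show "\<forall>p\<in>R. closed {z. Q z p}" using closed_up \<open>R \<subseteq> J\<close> by blast
  qed
  then obtain a where a: "a \<in> R" "\<forall>p\<in>R. Q a p" ..
  have "\<exists>b\<in>J - R. \<forall>p\<in>J - R. Q p b"
  proof (rule compact_total_preorder_has_top[OF compact_S \<open>J - R \<noteq> {}\<close>, of "\<lambda>u v. Q v u"])
    show "\<forall>a\<in>J - R. \<forall>b\<in>J - R. Q b a \<or> Q a b" using total by blast
    show "\<forall>a\<in>J - R. \<forall>b\<in>J - R. \<forall>c\<in>J - R. Q b a \<longrightarrow> Q c b \<longrightarrow> Q c a" using trans by blast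
    show "\<forall>p\<in>J - R. closed {z. Q p z}" using closed_down by blast
  qed
  then obtain b where b: "b \<in> J - R" "\<forall>p\<in>J - R. Q p b" ..
  have "a \<in> J" "b \<in> J" using a b \<open>R \<subseteq> J\<close> by auto
  moreover have "\<not> Q a b" using down a b by blast
  moreover have "Q b a" using total \<open>a \<in> J\<close> \<open>b \<in> J\<close> \<open>\<not> Q a b\<close> by blast
  moreover have "Q a w \<or> Q w b" if "w \<in> J" for w
    using a b that by blast
  ultimately show ?thesis using that by blast
qed

section \<open>Epsilon-chains\<close>

lemma eps_chain_mem: "eps_chain X f e x y \<Longrightarrow> x \<in> X \<and> y \<in> X"
  unfolding eps_chain_def by (metis order_refl zero_le)

lemma eps_chain_trans:
  assumes "eps_chain X f e x y" "eps_chain X f e y z"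
  shows "eps_chain X f e x z"
proof -
  obtain n xs where A: "n \<ge> 1" "xs 0 = x" "xs n = y" "\<forall>i\<le>n. xs i \<in> X"
    "\<forall>i<n. dist (f (xs i)) (xs (Suc i)) < e" using assms(1) unfolding eps_chain_def by blast
  obtain m ys where B: "m \<ge> 1" "ys 0 = y" "ys m = z" "\<forall>i\<le>m. ys i \<in> X"
    "\<forall>i<m. dist (f (ys i)) (ys (Suc i)) < e" using assms(2) unfolding eps_chain_def by blast
  define zs where "zs i = (if i \<le> n then xs i else ys (i - n))" for i
  have "n + m \<ge> 1" "zs 0 = x" "zs (n + m) = z" "\<forall>i\<le>n + m. zs i \<in> X"
    using A B by (auto simp: zs_def)
  moreover have "dist (f (zs i)) (zs (Suc i)) < e" if "i < n + m" for i
  proof (cases "i < n")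
    case True
    then show ?thesis using A by (auto simp: zs_def)
  next
    case False
    then have "zs i = ys (i - n)" "zs (Suc i) = ys (Suc (i - n))" "i - n < m"
      using A B that by (auto simp: zs_def Suc_diff_le)
    then show ?thesis using B by auto
  qed
  ultimately show ?thesis unfolding eps_chain_def by blast
qed

lemma eps_chain_pos: "eps_chain X f e x y \<Longrightarrow> e > 0"
  unfolding eps_chain_def by (metis le_less_trans order_refl less_le_trans zero_le_dist zero_less_one)

lemma chain_rel_trans: "chain_rel X f x y \<Longrightarrow> chain_rel X f y z \<Longrightarrow> chain_rel X f x z"
  unfolding chain_rel_def using eps_chain_trans by blast

lemma chain_rel_mem: "chain_rel X f x y \<Longrightarrow> x \<in> X \<and> y \<in> X"
  unfolding chain_rel_def using eps_chain_mem[of X f 1 x y] by simp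

lemma eps_chain_strict:
  assumes "eps_chain X f e x y"
  shows "\<exists>e' < e. eps_chain X f e' x y"
proof -
  obtain n xs where A: "n \<ge> 1" "xs 0 = x" "xs n = y" "\<forall>i\<le>n. xs i \<in> X"
    "\<forall>i<n. dist (f (xs i)) (xs (Suc i)) < e" using assms unfolding eps_chain_def by blast
  define jumps where "jumps = (\<lambda>i. dist (f (xs i)) (xs (Suc i))) ` {..<n}"
  have "finite jumps" "jumps \<noteq> {}" using A by (auto simp: jumps_def lessThan_empty_iff)
  then have "Max jumps < e" using A by (auto simp: jumps_def)
  moreover have "dist (f (xs i)) (xs (Suc i)) < (Max jumps + e) / 2" if "i < n" for i
  proof -
    have "dist (f (xs i)) (xs (Suc i)) \<le> Max jumps"
      using \<open>finite jumps\<close> that by (simp add: jumps_def)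
    then show ?thesis using \<open>Max jumps < e\<close> by (simp add: field_simps)
  qed
  ultimately show ?thesis using A unfolding eps_chain_def
    by (intro exI[of _ "(Max jumps + e) / 2"]) auto
qed

lemma eps_chain_perturb_start:
  assumes "eps_chain X f e z' p" "z \<in> X" "dist (f z) (f z') + e \<le> e'"
  shows "eps_chain X f e' z p"
proof -
  obtain n xs where A: "n \<ge> 1" "xs 0 = z'" "xs n = p" "\<forall>i\<le>n. xs i \<in> X"
    "\<forall>i<n. dist (f (xs i)) (xs (Suc i)) < e" using assms(1) unfolding eps_chain_def by blast
  have "e \<le> e'" using assms(3) zero_le_dist[of "f z" "f z'"] by linarith
  define ys where "ys = xs(0 := z)"
  have "ys 0 = z" "ys n = p" "\<forall>i\<le>n. ys i \<in> X" using A assms(2) by (auto simp: ys_def)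
  moreover have "dist (f (ys i)) (ys (Suc i)) < e'" if "i < n" for i
  proof (cases "i = 0")
    case True
    have "dist (f z) (xs 1) \<le> dist (f z) (f z') + dist (f z') (xs 1)" by (rule dist_triangle)
    moreover have "dist (f z') (xs 1) < e" using A that True by (metis One_nat_def)
    ultimately show ?thesis using True assms(3) by (simp add: ys_def)
  next
    case False
    then have "dist (f (ys i)) (ys (Suc i)) = dist (f (xs i)) (xs (Suc i))" by (simp add: ys_def)
    then show ?thesis using A(5) that \<open>e \<le> e'\<close> by (metis less_le_trans)
  qed
  ultimately show ?thesis using A unfolding eps_chain_def by blast
qed

lemma eps_chain_perturb_end:
  assumes "eps_chain X f e x z'" "z \<in> X" "dist z' z + e \<le> e'"
  shows "eps_chain X f e' x z"
proof -
  obtain n xs where A: "n \<ge> 1" "xs 0 = x" "xs n = z'" "\<forall>i\<le>n. xs i \<in> X"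
    "\<forall>i<n. dist (f (xs i)) (xs (Suc i)) < e" using assms(1) unfolding eps_chain_def by blast
  have "e \<le> e'" using assms(3) zero_le_dist[of z' z] by linarith
  define ys where "ys = xs(n := z)"
  have "ys 0 = x" "ys n = z" "\<forall>i\<le>n. ys i \<in> X" using A assms(2) by (auto simp: ys_def)
  moreover have "dist (f (ys i)) (ys (Suc i)) < e'" if "i < n" for i
  proof (cases "Suc i = n")
    case True
    have "dist (f (xs i)) z \<le> dist (f (xs i)) z' + dist z' z" by (rule dist_triangle)
    moreover have "dist (f (xs i)) z' < e" using A that True by metis
    ultimately show ?thesis using True assms(3) that by (simp add: ys_def)
  next
    case False
    then have "dist (f (ys i)) (ys (Suc i)) = dist (f (xs i)) (xs (Suc i))" using that by (simp add: ys_def)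
    then show ?thesis using A(5) that \<open>e \<le> e'\<close> by (metis less_le_trans)
  qed
  ultimately show ?thesis using A unfolding eps_chain_def by blast
qed

lemma eps_chain_near_end:
  assumes "eps_chain X f e x z"
  obtains d where "d > 0" "\<forall>z'\<in>X. dist z z' < d \<longrightarrow> eps_chain X f e x z'"
proof -
  obtain e' where "e' < e" "eps_chain X f e' x z" using eps_chain_strict assms by blast
  then show ?thesis
    using that[of "e - e'"] eps_chain_perturb_end[of X f e' x z _ e] by auto
qed

lemma eps_chain_from_near_start:
  assumes "continuous_on X f" "z \<in> X" "eps_chain X f e z p"
  obtains d where "d > 0" "\<forall>z'\<in>X. dist z' z < d \<longrightarrow> eps_chain X f e z' p"
proof -
  obtain e' where e': "e' < e" "eps_chain X f e' z p" using eps_chain_strict assms(3) by blast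
  then obtain d where "d > 0" "\<forall>z'\<in>X. dist z' z < d \<longrightarrow> dist (f z') (f z) < e - e'"
    using assms(1,2) unfolding continuous_on_iff by (metis diff_gt_0_iff_gt)
  moreover have "eps_chain X f e z' p" if "z' \<in> X" "dist (f z') (f z) < e - e'" for z'
    using eps_chain_perturb_start[OF e'(2) that(1)] that(2) by (simp add: dist_commute)
  ultimately show ?thesis using that by blast
qed

section \<open>Closed sets defined by the chain relation\<close>

lemma closedI_approachable:
  fixes S :: "'a::metric_space set"
  assumes "\<And>x. \<forall>e>0. \<exists>y\<in>S. dist y x < e \<Longrightarrow> x \<in> S"
  shows "closed S"
proof -
  have "closure S \<subseteq> S"
    using assms by (auto simp: closure_approachable)
  then show ?thesis by (simp add: closure_subset_eq)
qed

lemma approachable_in_closed: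
  fixes S :: "'a::metric_space set"
  assumes "closed X" "S \<subseteq> X" "\<forall>e>0. \<exists>y\<in>S. dist y x < e"
  shows "x \<in> X"
  using assms closed_approachable[of X x] by blast

lemma continuous_on_at_point:
  assumes "continuous_on X f" "z \<in> X" "e > 0"
  obtains d where "d > 0" "\<forall>z'\<in>X. dist z' z < d \<longrightarrow> dist (f z) (f z') < e"
  using assms unfolding continuous_on_iff by (metis dist_commute)

lemma closed_chain_rel_to:
  assumes "closed X" "continuous_on X f"
  shows "closed {z. chain_rel X f z p}"
proof (rule closedI_approachable)
  fix z assume approx: "\<forall>e>0. \<exists>y\<in>{z. chain_rel X f z p}. dist y z < e"
  have "z \<in> X" using approachable_in_closed[OF assms(1) _ approx] chain_rel_mem by blast
  have "eps_chain X f e z p" if "e > 0" for e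
  proof -
    obtain d where "d > 0" and d: "\<forall>z'\<in>X. dist z' z < d \<longrightarrow> dist (f z) (f z') < e / 2"
      using continuous_on_at_point[OF assms(2) \<open>z \<in> X\<close>, of "e / 2"] \<open>e > 0\<close> by auto
    then obtain z' where z': "chain_rel X f z' p" "dist z' z < d" using approx by auto
    then have "dist (f z) (f z') < e / 2" using d chain_rel_mem by blast
    then have "dist (f z) (f z') + e / 2 \<le> e" by linarith
    moreover have "eps_chain X f (e / 2) z' p" using z' \<open>e > 0\<close> by (simp add: chain_rel_def)
    ultimately show ?thesis using eps_chain_perturb_start \<open>z \<in> X\<close> by blast
  qed
  then show "z \<in> {z. chain_rel X f z p}" by (simp add: chain_rel_def)
qed

lemma closed_chain_rel_from:
  assumes "closed X"
  shows "closed {z. chain_rel X f p z}"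
proof (rule closedI_approachable)
  fix z assume approx: "\<forall>e>0. \<exists>y\<in>{z. chain_rel X f p z}. dist y z < e"
  have "z \<in> X" using approachable_in_closed[OF assms(1) _ approx] chain_rel_mem by blast
  have "eps_chain X f e p z" if "e > 0" for e
  proof -
    obtain z' where z': "chain_rel X f p z'" "dist z' z < e / 2"
      using approx \<open>e > 0\<close> by (metis half_gt_zero mem_Collect_eq)
    then have "eps_chain X f (e / 2) p z'" using \<open>e > 0\<close> by (simp add: chain_rel_def)
    moreover have "dist z' z + e / 2 \<le> e" using z'(2) by linarith
    ultimately show ?thesis using eps_chain_perturb_end \<open>z \<in> X\<close> by blast
  qed
  then show "z \<in> {z. chain_rel X f p z}" by (simp add: chain_rel_def)
qed

lemma closed_chain_recurrent_set:
  assumes "closed X" "continuous_on X f"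
  shows "closed (chain_recurrent_set X f)"
proof (rule closedI_approachable)
  fix z assume approx: "\<forall>e>0. \<exists>y\<in>chain_recurrent_set X f. dist y z < e"
  have "z \<in> X"
    using approachable_in_closed[OF assms(1) _ approx] by (auto simp: chain_recurrent_set_def)
  have "eps_chain X f e z z" if "e > 0" for e
  proof -
    obtain d where "d > 0" and d: "\<forall>z'\<in>X. dist z' z < d \<longrightarrow> dist (f z) (f z') < e / 3"
      using continuous_on_at_point[OF assms(2) \<open>z \<in> X\<close>, of "e / 3"] \<open>e > 0\<close> by auto
    then obtain z' where z': "z' \<in> chain_recurrent_set X f" "dist z' z < min d (e / 3)"
      using approx \<open>e > 0\<close> by (metis min_less_iff_conj zero_less_divide_iff zero_less_numeral)
    then have "z' \<in> X" "eps_chain X f (e / 3) z' z'"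
      using \<open>e > 0\<close> by (auto simp: chain_recurrent_set_def chain_rel_def)
    moreover have "dist (f z) (f z') < e / 3" using d z' calculation(1) by auto
    then have "dist (f z) (f z') + e / 3 \<le> 2 * e / 3" by linarith
    ultimately have "eps_chain X f (2 * e / 3) z z'" using eps_chain_perturb_start \<open>z \<in> X\<close> by blast
    moreover have "dist z' z + 2 * e / 3 \<le> e" using z'(2) by linarith
    ultimately show ?thesis using eps_chain_perturb_end \<open>z \<in> X\<close> by blast
  qed
  then show "z \<in> chain_recurrent_set X f"
    using \<open>z \<in> X\<close> by (simp add: chain_recurrent_set_def chain_rel_def)
qed

lemma closed_eps_reachable:
  assumes "continuous_on X f" "closed J" "J \<subseteq> chain_recurrent_set X f"
  shows "closed {z\<in>J. eps_chain X f e x z}"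
proof (rule closedI_approachable)
  fix z assume approx: "\<forall>d>0. \<exists>y\<in>{z\<in>J. eps_chain X f e x z}. dist y z < d"
  then have "z \<in> J" using approachable_in_closed[OF assms(2)] by blast
  then have "z \<in> X" "chain_rel X f z z" using assms(3) by (auto simp: chain_recurrent_set_def)
  have "e > 0" using approx[rule_format, of 1] eps_chain_pos by auto
  then obtain d where "d > 0" and d: "\<forall>z'\<in>X. dist z' z < d \<longrightarrow> eps_chain X f e z' z"
    using eps_chain_from_near_start[OF assms(1) \<open>z \<in> X\<close>] \<open>chain_rel X f z z\<close>
    by (metis chain_rel_def)
  obtain z' where "z' \<in> J" "eps_chain X f e x z'" "dist z' z < d" using approx \<open>d > 0\<close> by auto
  then show "z \<in> {z\<in>J. eps_chain X f e x z}"
    using d eps_chain_trans eps_chain_mem \<open>z \<in> J\<close> by blast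
qed

lemma closed_eps_unreachable:
  assumes "closed J" "J \<subseteq> X"
  shows "closed {z\<in>J. \<not> eps_chain X f e x z}"
proof (rule closedI_approachable)
  fix z assume approx: "\<forall>d>0. \<exists>y\<in>{z\<in>J. \<not> eps_chain X f e x z}. dist y z < d"
  then have "z \<in> J" using approachable_in_closed[OF assms(1)] by blast
  show "z \<in> {z\<in>J. \<not> eps_chain X f e x z}"
  proof (rule ccontr)
    assume "z \<notin> {z\<in>J. \<not> eps_chain X f e x z}"
    then obtain d where "d > 0" and d: "\<forall>z'\<in>X. dist z z' < d \<longrightarrow> eps_chain X f e x z'"
      using eps_chain_near_end \<open>z \<in> J\<close> by blast
    then obtain z' where "z' \<in> J" "\<not> eps_chain X f e x z'" "dist z z' < d"
      using approx by (auto simp: dist_commute)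
    then show False using d assms(2) by blast
  qed
qed

section \<open>Chain classes of a set of chain recurrent points\<close>

lemma linear_dense_orderD:
  assumes "linear_dense_order P le"
  shows "\<forall>a\<in>P. \<forall>b\<in>P. le a b \<or> le b a"
    and "\<exists>a\<in>P. \<exists>b\<in>P. a \<noteq> b"
    and "\<forall>a\<in>P. \<forall>b\<in>P. le a b \<and> a \<noteq> b \<longrightarrow> (\<exists>c\<in>P. le a c \<and> a \<noteq> c \<and> le c b \<and> c \<noteq> b)"
  using assms unfolding linear_dense_order_def by blast+

context
  fixes X :: "'a::metric_space set" and f :: "'a \<Rightarrow> 'a" and J :: "'a set"
  assumes J_chain_recurrent: "J \<subseteq> chain_recurrent_set X f"
begin

abbreviation chain_class :: "'a \<Rightarrow> 'a set" where
  "chain_class z \<equiv> (chainE X f \<inter> J \<times> J) `` {z}"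

lemma classes_of_eq: "classes_of X f J = chain_class ` J"
  by (auto simp: classes_of_def quotient_def)

lemma chain_class_eq: "z \<in> J \<Longrightarrow> chain_class z = {w\<in>J. chain_rel X f z w \<and> chain_rel X f w z}"
  using J_chain_recurrent by (auto simp: chainE_def)

lemma chain_class_self: "z \<in> J \<Longrightarrow> z \<in> chain_class z"
  using J_chain_recurrent chain_class_eq by (auto simp: chain_recurrent_set_def)

lemma class_le_chain_class_iff:
  assumes "p \<in> J" "q \<in> J"
  shows "class_le X f (chain_class p) (chain_class q) \<longleftrightarrow> chain_rel X f q p"
proof
  assume "class_le X f (chain_class p) (chain_class q)"
  then obtain x y where "x \<in> chain_class p" "y \<in> chain_class q" "chain_rel X f y x"
    unfolding class_le_def by blast
  then have "chain_rel X f q y" "chain_rel X f y x" "chain_rel X f x p"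
    using chain_class_eq assms by auto
  then show "chain_rel X f q p" using chain_rel_trans by metis
next
  assume "chain_rel X f q p"
  then show "class_le X f (chain_class p) (chain_class q)"
    using chain_class_self assms unfolding class_le_def by blast
qed

lemma chain_class_eq_iff:
  assumes "p \<in> J" "q \<in> J"
  shows "chain_class p = chain_class q \<longleftrightarrow> chain_rel X f p q \<and> chain_rel X f q p"
proof
  assume "chain_class p = chain_class q"
  then show "chain_rel X f p q \<and> chain_rel X f q p"
    using chain_class_self[OF \<open>q \<in> J\<close>] chain_class_eq assms by auto
next
  assume "chain_rel X f p q \<and> chain_rel X f q p"
  then show "chain_class p = chain_class q"
    unfolding chain_class_eq[OF assms(1)] chain_class_eq[OF assms(2)]
    using chain_rel_trans by metis
qed

lemma linear_dense_order_classes_ofD: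
  assumes "linear_dense_order (classes_of X f J) (class_le X f)"
  shows "\<forall>p\<in>J. \<forall>q\<in>J. chain_rel X f p q \<or> chain_rel X f q p"
    and "\<exists>x\<in>J. \<exists>y\<in>J. \<not> chain_rel X f x y"
    and "\<forall>p\<in>J. \<forall>q\<in>J. chain_rel X f q p \<and> \<not> chain_rel X f p q \<longrightarrow>
          (\<exists>w\<in>J. chain_rel X f q w \<and> \<not> chain_rel X f w q \<and> chain_rel X f w p \<and> \<not> chain_rel X f p w)"
proof -
  let ?C = "chain_class ` J"
  have total: "\<forall>a\<in>?C. \<forall>b\<in>?C. class_le X f a b \<or> class_le X f b a"
    and nontrivial: "\<exists>a\<in>?C. \<exists>b\<in>?C. a \<noteq> b"
    and dense: "\<forall>a\<in>?C. \<forall>b\<in>?C. class_le X f a b \<and> a \<noteq> b \<longrightarrow>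
      (\<exists>c\<in>?C. class_le X f a c \<and> a \<noteq> c \<and> class_le X f c b \<and> c \<noteq> b)"
    using linear_dense_orderD[OF assms] unfolding classes_of_eq by blast+
  show "\<forall>p\<in>J. \<forall>q\<in>J. chain_rel X f p q \<or> chain_rel X f q p"
  proof (intro ballI)
    fix p q assume "p \<in> J" "q \<in> J"
    then have "class_le X f (chain_class q) (chain_class p) \<or> class_le X f (chain_class p) (chain_class q)"
      using total by simp
    then show "chain_rel X f p q \<or> chain_rel X f q p"
      using class_le_chain_class_iff \<open>p \<in> J\<close> \<open>q \<in> J\<close> by blast
  qed
  obtain x y where "x \<in> J" "y \<in> J" "chain_class x \<noteq> chain_class y"
    using nontrivial by auto
  then show "\<exists>x\<in>J. \<exists>y\<in>J. \<not> chain_rel X f x y"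
    using chain_class_eq_iff by blast
  show "\<forall>p\<in>J. \<forall>q\<in>J. chain_rel X f q p \<and> \<not> chain_rel X f p q \<longrightarrow>
          (\<exists>w\<in>J. chain_rel X f q w \<and> \<not> chain_rel X f w q \<and> chain_rel X f w p \<and> \<not> chain_rel X f p w)"
  proof (intro ballI impI)
    fix p q assume "p \<in> J" "q \<in> J" and strict: "chain_rel X f q p \<and> \<not> chain_rel X f p q"
    then have "class_le X f (chain_class p) (chain_class q)" "chain_class p \<noteq> chain_class q"
      using class_le_chain_class_iff chain_class_eq_iff by auto
    then obtain c where "c \<in> ?C" "class_le X f (chain_class p) c" "chain_class p \<noteq> c"
      "class_le X f c (chain_class q)" "c \<noteq> chain_class q"
      using dense \<open>p \<in> J\<close> \<open>q \<in> J\<close> by (meson imageI)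
    then obtain w where "w \<in> J" "class_le X f (chain_class p) (chain_class w)"
      "chain_class p \<noteq> chain_class w" "class_le X f (chain_class w) (chain_class q)"
      "chain_class w \<noteq> chain_class q"
      by blast
    then have "chain_rel X f q w \<and> \<not> chain_rel X f w q \<and> chain_rel X f w p \<and> \<not> chain_rel X f p w"
      using class_le_chain_class_iff[OF \<open>p \<in> J\<close> \<open>w \<in> J\<close>] class_le_chain_class_iff[OF \<open>w \<in> J\<close> \<open>q \<in> J\<close>]
        chain_class_eq_iff[OF \<open>p \<in> J\<close> \<open>w \<in> J\<close>] chain_class_eq_iff[OF \<open>w \<in> J\<close> \<open>q \<in> J\<close>]
      by auto
    then show "\<exists>w\<in>J. chain_rel X f q w \<and> \<not> chain_rel X f w q \<and> chain_rel X f w p \<and> \<not> chain_rel X f p w"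
      using \<open>w \<in> J\<close> by blast
  qed
qed

end

lemma not_linear_dense_order_classes_of:
  fixes X :: "'a::metric_space set"
  assumes "compact X" "continuous_on X f" "closed J" "J \<subseteq> chain_recurrent_set X f"
  shows "\<not> linear_dense_order (classes_of X f J) (class_le X f)"
proof
  assume "linear_dense_order (classes_of X f J) (class_le X f)"
  note points = linear_dense_order_classes_ofD[OF assms(4) this]
  have "closed X" using assms(1) by (rule compact_imp_closed)
  have "J \<subseteq> X" using assms(4) by (auto simp: chain_recurrent_set_def)
  then have "compact J" using compact_Int_closed[OF assms(1,3)] by (simp add: Int_absorb1)
  obtain x y where "x \<in> J" "y \<in> J" "\<not> chain_rel X f x y" using points(2) by blast
  then obtain e where "e > 0" "\<not> eps_chain X f e x y" unfolding chain_rel_def by blast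
  define R where "R = {z\<in>J. eps_chain X f e x z}"
  have "J - R = {z\<in>J. \<not> eps_chain X f e x z}" by (auto simp: R_def)
  have "x \<in> R"
    using \<open>x \<in> J\<close> \<open>e > 0\<close> assms(4) by (auto simp: R_def chain_recurrent_set_def chain_rel_def)
  obtain a b where "a \<in> J" "b \<in> J" "chain_rel X f b a" "\<not> chain_rel X f a b"
    "\<not> (\<exists>w\<in>J. chain_rel X f b w \<and> \<not> chain_rel X f w b \<and> chain_rel X f w a \<and> \<not> chain_rel X f a w)"
  proof (rule compact_total_preorder_clopen_down_set_gap[OF \<open>compact J\<close>, of "chain_rel X f" R])
    show "\<forall>a\<in>J. \<forall>b\<in>J. \<forall>c\<in>J. chain_rel X f a b \<longrightarrow> chain_rel X f b c \<longrightarrow> chain_rel X f a c"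
      using chain_rel_trans by blast
    show "\<forall>p\<in>J. closed {z. chain_rel X f z p}"
      using closed_chain_rel_to[OF \<open>closed X\<close> assms(2)] by blast
    show "\<forall>p\<in>J. closed {z. chain_rel X f p z}"
      using closed_chain_rel_from[OF \<open>closed X\<close>] by blast
    show "closed R" unfolding R_def using closed_eps_reachable[OF assms(2-4)] .
    show "closed (J - R)"
      unfolding \<open>J - R = _\<close> using closed_eps_unreachable[OF assms(3) \<open>J \<subseteq> X\<close>] .
    show "J - R \<noteq> {}" using \<open>y \<in> J\<close> \<open>\<not> eps_chain X f e x y\<close> by (auto simp: R_def)
    show "\<forall>z\<in>R. \<forall>w\<in>J. chain_rel X f z w \<longrightarrow> w \<in> R"
      unfolding R_def chain_rel_def using \<open>e > 0\<close> eps_chain_trans by blast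
  qed (use points(1) \<open>x \<in> R\<close> in \<open>auto simp: R_def\<close>)
  then show False using points(3) by blast
qed

theorem theorem2p1:
  fixes X :: "'a::metric_space set" and f :: "'a \<Rightarrow> 'a"
  assumes "compact X" and "continuous_on X f" and "f ` X \<subseteq> X"
  shows "(\<not> (\<exists>J. closed J \<and> J \<subseteq> chain_recurrent_set X f \<and>
              linear_dense_order (classes_of X f J) (class_le X f))) \<and>
         \<not> linear_dense_order (classes_of X f (chain_recurrent_set X f)) (class_le X f)"
proof
  show no_closed_J: "\<not> (\<exists>J. closed J \<and> J \<subseteq> chain_recurrent_set X f \<and>
              linear_dense_order (classes_of X f J) (class_le X f))"
    using not_linear_dense_order_classes_of[OF assms(1,2)] by blast
  have "closed (chain_recurrent_set X f)"
    using closed_chain_recurrent_set[OF compact_imp_closed[OF assms(1)] assms(2)] .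
  then show "\<not> linear_dense_order (classes_of X f (chain_recurrent_set X f)) (class_le X f)"
    using no_closed_J by blast
qed

end
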